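(* Let $S$ be a symmetric numerical semigroup. Then $\#I(S)=\#T(S)$.
   Context: A numerical semigroup is a subset $S\subseteq\mathbb{N}$ (nonnegative integers) containing $0$, closed under addition, with $\mathbb{N}\setminus S$ finite. $F(S)$ is the Frobenius number, the largest integer not in $S$. $S$ is symmetric if $F(S)-x\in S$ for all $x\in\mathbb{Z}\setminus S$. An isolated gap of $S$ is an element $x\in\mathbb{N}\setminus S$ with $x-1,x+1\in S$; $I(S)$ is the set of isolated gaps. $N(S)=\{s\in S: s<F(S)\}$ and $T(S)=\{s\in N(S): s-1\notin S \text{ and } s+1\notin S\}$. *)

theory Defs
  imports Main
begin

definition numerical_semigroup :: "nat set \<Rightarrow> bool" where
  "numerical_semigroup S \<longleftrightarrow> 0 \<in> S \<and> (\<forall>a\<in>S. \<forall>b\<in>S. a + b \<in> S) \<and> finite (UNIV - S)"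

text \<open>Frobenius number, as an integer; by the usual convention it is -1 when S is all of N.\<close>
definition frobenius :: "nat set \<Rightarrow> int" where
  "frobenius S = (if UNIV - S = {} then -1 else int (Max (UNIV - S)))"

definition symmetric_ns :: "nat set \<Rightarrow> bool" where
  "symmetric_ns S \<longleftrightarrow> (\<forall>x::int. x \<notin> int ` S \<longrightarrow> frobenius S - x \<in> int ` S)"

definition isolated_gaps :: "nat set \<Rightarrow> nat set" where
  "isolated_gaps S = {x. x \<notin> S \<and> x \<ge> 1 \<and> x - 1 \<in> S \<and> x + 1 \<in> S}"

definition N_set :: "nat set \<Rightarrow> nat set" where
  "N_set S = {s \<in> S. int s < frobenius S}"

definition T_set :: "nat set \<Rightarrow> nat set" where
  "T_set S = {s \<in> N_set S. int s - 1 \<notin> int ` S \<and> s + 1 \<notin> S}"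

end

theory Submission
  imports Defs
begin

text \<open>For a symmetric numerical semigroup with Frobenius number F, an integer z lies in S exactly
  when F - z does not. Hence the reflection z \<mapsto> F - z exchanges the patterns
  (element, gap, element) and (gap, element, gap) at z - 1, z, z + 1, i.e. it maps the isolated
  gaps bijectively onto T(S); the condition s < F in T(S) is automatic on the image.\<close>

lemma in_int_image_iff: "z \<in> int ` A \<longleftrightarrow> 0 \<le> z \<and> nat z \<in> A"
  by (metis image_iff int_nat_eq nat_int of_nat_0_le_iff)

lemma int_T_set:
  "int ` T_set S =
     {z. z \<in> int ` S \<and> z < frobenius S \<and> z - 1 \<notin> int ` S \<and> z + 1 \<notin> int ` S}"
  unfolding set_eq_iff T_set_def N_set_def mem_Collect_eq in_int_image_iff
  by (auto simp: nat_add_distrib)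

lemma int_isolated_gaps:
  "int ` isolated_gaps S = {z. z \<notin> int ` S \<and> z - 1 \<in> int ` S \<and> z + 1 \<in> int ` S}"
  unfolding set_eq_iff isolated_gaps_def mem_Collect_eq in_int_image_iff
  by (auto simp: nat_add_distrib nat_diff_distrib)

lemma frobenius_notin:
  assumes "finite (UNIV - S)"
  shows "frobenius S \<notin> int ` S"
proof (cases "UNIV - S = {}")
  case True
  then show ?thesis unfolding frobenius_def by auto
next
  case False
  have "Max (UNIV - S) \<notin> S" using Max_in[OF assms False] by blast
  then show ?thesis using False unfolding frobenius_def by auto
qed

lemma frobenius_minus_notin:
  assumes "numerical_semigroup S" and "z \<in> int ` S"
  shows "frobenius S - z \<notin> int ` S"
proof
  assume "frobenius S - z \<in> int ` S"
  then obtain b where b: "b \<in> S" "frobenius S - z = int b" by auto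
  obtain a where a: "a \<in> S" "z = int a" using assms(2) by auto
  have "a + b \<in> S" using assms(1) a b unfolding numerical_semigroup_def by blast
  moreover have "frobenius S = int (a + b)" using a b by simp
  ultimately have "frobenius S \<in> int ` S" by blast
  then show False using assms(1) frobenius_notin unfolding numerical_semigroup_def by blast
qed

lemma symmetric_frobenius_minus_in_iff:
  assumes "numerical_semigroup S" and "symmetric_ns S"
  shows "frobenius S - z \<in> int ` S \<longleftrightarrow> z \<notin> int ` S"
  using assms frobenius_minus_notin unfolding symmetric_ns_def by blast

lemma reflect_isolated_gaps:
  assumes "numerical_semigroup S" and "symmetric_ns S"
  shows "(\<lambda>z. frobenius S - z) ` int ` isolated_gaps S = int ` T_set S"
proof -
  let ?F = "frobenius S"
  have mem: "?F - z \<in> int ` S \<longleftrightarrow> z \<notin> int ` S" for z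
    using symmetric_frobenius_minus_in_iff[OF assms] .
  have reflect: "?F - z \<in> int ` T_set S \<longleftrightarrow> z \<in> int ` isolated_gaps S" for z
  proof -
    have "?F - z - 1 \<in> int ` S \<longleftrightarrow> z + 1 \<notin> int ` S"
      and "?F - z + 1 \<in> int ` S \<longleftrightarrow> z - 1 \<notin> int ` S"
      using mem[of "z + 1"] mem[of "z - 1"] by (simp_all add: algebra_simps)
    moreover have "z - 1 \<in> int ` S \<Longrightarrow> 0 < z" by (auto simp: in_int_image_iff)
    ultimately show ?thesis unfolding int_T_set int_isolated_gaps mem_Collect_eq mem by auto
  qed
  show ?thesis
  proof (intro set_eqI iffI)
    fix y assume "y \<in> int ` T_set S"
    then have "?F - y \<in> int ` isolated_gaps S" using reflect[of "?F - y"] by simp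
    then show "y \<in> (\<lambda>z. ?F - z) ` int ` isolated_gaps S" by (rule rev_image_eqI) simp
  qed (use reflect in blast)
qed

theorem proposition3p1:
  assumes "numerical_semigroup S" and "symmetric_ns S"
  shows "card (isolated_gaps S) = card (T_set S)"
proof -
  have "card (isolated_gaps S) = card ((\<lambda>z. frobenius S - z) ` int ` isolated_gaps S)"
    by (simp add: card_image inj_on_def)
  also have "\<dots> = card (T_set S)"
    by (simp add: reflect_isolated_gaps[OF assms] card_image)
  finally show ?thesis .
qed

end
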